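(* Let $X$ be a real topological vector space, let $C$ be a convex subset of $X$, and let $f:X\times X\to\mathbb{R}$ be a bifunction such that $f(x,\cdot)$ is quasi-convex for each $x\in X$. If $f$ is cyclically quasi-monotone on $C$, then $f$ is properly quasi-monotone on $C$.
   Context: A function $h:X\to\mathbb{R}$ is quasi-convex if all its sublevel sets $\{x: h(x)\leq\lambda\}$ are convex. The bifunction $f$ is cyclically quasi-monotone on $C$ if for every $n\in\mathbb{N}$ and all $x_0,\dots,x_n\in C$ there is $i\in\{0,\dots,n\}$ with $f(x_i,x_{i+1})\leq0$, where $x_{n+1}:=x_0$. It is properly quasi-monotone on $C$ if for every finite non-empty $A\subset C$ and every $x\in\operatorname{co}(A)$ one has $\min_{a\in A}f(a,x)\leq0$. *)

theory Defs
  imports "HOL-Analysis.Analysis"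
begin

definition quasi_convex :: "('a::real_vector \<Rightarrow> real) \<Rightarrow> bool" where
  "quasi_convex h \<longleftrightarrow> (\<forall>c::real. convex {x. h x \<le> c})"

definition cyclically_quasi_monotone :: "('a \<Rightarrow> 'a \<Rightarrow> real) \<Rightarrow> 'a set \<Rightarrow> bool" where
  "cyclically_quasi_monotone f C \<longleftrightarrow>
     (\<forall>(n::nat) (x::nat \<Rightarrow> 'a). (\<forall>i\<le>n. x i \<in> C) \<longrightarrow>
        (\<exists>i\<le>n. f (x i) (if i = n then x 0 else x (Suc i)) \<le> 0))"

definition properly_quasi_monotone :: "('a::real_vector \<Rightarrow> 'a \<Rightarrow> real) \<Rightarrow> 'a set \<Rightarrow> bool" where
  "properly_quasi_monotone f C \<longleftrightarrow>
     (\<forall>A x. finite A \<and> A \<noteq> {} \<and> A \<subseteq> C \<and> x \<in> convex hull A \<longrightarrow>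
        (MIN a\<in>A. f a x) \<le> 0)"

end

theory Submission
  imports Defs
begin

text \<open>Suppose \<open>x \<in> convex hull A\<close> and \<open>f a x > 0\<close> for every \<open>a \<in> A\<close>. Then by quasi-convexity of \<open>f a\<close> the sublevel
  set \<open>{y. f a y \<le> 0}\<close> cannot contain \<open>A\<close>, so there is \<open>g a \<in> A\<close> with \<open>f a (g a) > 0\<close>.
  Iterating \<open>g\<close> inside the finite set \<open>A\<close> eventually revisits a point, which closes a cycle
  along which \<open>f\<close> is positive, contradicting cyclic quasi-monotonicity.\<close>

lemma quasi_convex_hull_le:
  assumes "quasi_convex h" and "\<forall>a\<in>A. h a \<le> c" and "x \<in> convex hull A"
  shows "h x \<le> c"
proof -
  have "A \<subseteq> {y. h y \<le> c}"
    using assms(2) by blast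
  moreover have "convex {y. h y \<le> c}"
    using assms(1) by (simp add: quasi_convex_def)
  ultimately have "convex hull A \<subseteq> {y. h y \<le> c}"
    by (rule hull_minimal)
  with assms(3) show ?thesis by blast
qed

lemma funpow_mem_invariant:
  assumes "a \<in> A" and "g ` A \<subseteq> A"
  shows "(g ^^ k) a \<in> A"
  by (induction k) (use assms in auto)

lemma funpow_finite_orbit_repeats:
  assumes "finite A" and "a \<in> A" and "g ` A \<subseteq> A"
  obtains i j where "i < j" and "(g ^^ i) a = (g ^^ j) a"
proof -
  have orbit: "(g ^^ k) a \<in> A" for k
    using assms(2,3) by (rule funpow_mem_invariant)
  have "\<not> inj (\<lambda>k. (g ^^ k) a)"
  proof
    assume "inj (\<lambda>k. (g ^^ k) a)"
    moreover have "finite (range (\<lambda>k. (g ^^ k) a))"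
      using orbit assms(1) by (meson finite_subset image_subsetI)
    ultimately show False
      using finite_imageD by blast
  qed
  then obtain i j where "i \<noteq> j" and "(g ^^ i) a = (g ^^ j) a"
    unfolding inj_def by blast
  with that show thesis
    by (metis linorder_neqE_nat)
qed

lemma cyclically_quasi_monotone_self_map:
  assumes "cyclically_quasi_monotone f C"
    and "finite A" and "A \<noteq> {}" and "A \<subseteq> C" and "g ` A \<subseteq> A"
  shows "\<exists>a\<in>A. f a (g a) \<le> 0"
proof -
  obtain a where "a \<in> A"
    using assms(3) by blast
  have orbit: "(g ^^ k) a \<in> A" for k
    using \<open>a \<in> A\<close> assms(5) by (rule funpow_mem_invariant)
  obtain i j where "i < j" and "(g ^^ i) a = (g ^^ j) a"
    using funpow_finite_orbit_repeats[OF assms(2) \<open>a \<in> A\<close> assms(5)] .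
  define n where "n = j - i - 1"
  define x where "x k = (g ^^ (i + k)) a" for k
  have "\<forall>k\<le>n. x k \<in> C"
    using orbit assms(4) by (auto simp: x_def)
  then obtain k where "k \<le> n" and k: "f (x k) (if k = n then x 0 else x (Suc k)) \<le> 0"
    using assms(1) unfolding cyclically_quasi_monotone_def by blast
  have "(if k = n then x 0 else x (Suc k)) = g (x k)"
  proof (cases "k = n")
    case True
    then have "Suc (i + k) = j"
      using \<open>i < j\<close> by (simp add: n_def)
    then show ?thesis
      using True \<open>(g ^^ i) a = (g ^^ j) a\<close> by (auto simp: x_def)
  next
    case False
    then show ?thesis
      by (simp add: x_def)
  qed
  with k have "f (x k) (g (x k)) \<le> 0"
    by simp
  with orbit show ?thesis
    unfolding x_def by blast
qed

theorem proposition3p3: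
  fixes f :: "'a::real_vector \<Rightarrow> 'a \<Rightarrow> real" and C :: "'a set"
  assumes "convex C"
    and "\<And>x. quasi_convex (f x)"
    and "cyclically_quasi_monotone f C"
  shows "properly_quasi_monotone f C"
  unfolding properly_quasi_monotone_def
proof (intro allI impI)
  fix A x
  assume A: "finite A \<and> A \<noteq> {} \<and> A \<subseteq> C \<and> x \<in> convex hull A"
  have "\<exists>a\<in>A. f a x \<le> 0"
  proof (rule ccontr)
    assume "\<not> (\<exists>a\<in>A. f a x \<le> 0)"
    then have "\<forall>a\<in>A. \<exists>b\<in>A. f a b > 0"
      using quasi_convex_hull_le[OF assms(2)] A by (meson not_le)
    then obtain g where "g ` A \<subseteq> A" and "\<forall>a\<in>A. f a (g a) > 0"
      by (metis image_subsetI)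
    then show False
      using cyclically_quasi_monotone_self_map[OF assms(3), of A g] A by fastforce
  qed
  with A show "(MIN a\<in>A. f a x) \<le> 0"
    by (simp add: Min_le_iff)
qed

end
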